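(* Let $m,n$ be nonzero integers with $|m|<|n|$ such that $m$ does not divide $n$. Let $u_1,u_2$ be vertices of type $a$ of $\Lambda_{m,n}$ with $u_1<u_2$ or $u_2<u_1$. Then $u_1$ and $u_2$ correspond to adjacent vertices of $T$ if and only if there does not exist any vertex $u_3\in\Lambda_{m,n}^{(0)}\setminus\{u_1,u_2\}$ such that $\mathrm{lk}_\Lambda(u_1)\cap \mathrm{lk}_\Lambda(u_2)\subseteq \mathrm{lk}_\Lambda(u_3)$.
   Context: $\mathrm{BS}(m,n)=\langle a,t\mid ta^mt^{-1}=a^n\rangle$; $\Upsilon_{m,n}$ is its Cayley graph for $\{a,t\}$ (edges $g\to gs$ oriented, labeled $s$); $a$-lines and $t$-lines are the subgraphs spanned by left cosets of $\langle a\rangle$ and $\langle t\rangle$. $\Lambda_{m,n}$ has one vertex per $a$-line or $t$-line (of type $a$ or $t$), adjacent when the lines intersect; $\mathrm{lk}_\Lambda(u)$ is the set of neighbours of $u$. $T$ is the Bass–Serre tree whose vertices are the $a$-lines (= type-$a$ vertices), with one edge oriented from $\ell$ to $\ell'$ for each pair of $a$-lines such that $gt\in\ell'$ for some $g\in\ell$. Partial order: $v_1\le v_2$ if every edge of the geodesic from $v_1$ to $v_2$ in $T$ is oriented toward $v_2$; $<$ denotes strict order. *)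

theory Defs
  imports Main
begin

text \<open>Baumslag--Solitar group BS(m,n) = < a, t | t a^m t^-1 = a^n >, presented
  as words in the letters a, t and their inverses modulo the equivalence
  generated by free cancellation and insertion/deletion of the relator.
  A group element is an equivalence class of words.\<close>

datatype gen = GA | GT

type_synonym letter = "gen \<times> bool"   (* True = positive exponent *)
type_synonym word = "letter list"

definition inv_letter :: "letter \<Rightarrow> letter" where
  "inv_letter x = (fst x, \<not> snd x)"

definition gpow :: "gen \<Rightarrow> int \<Rightarrow> word" where
  "gpow s k = replicate (nat \<bar>k\<bar>) (s, k \<ge> 0)"

definition bs_relator :: "int \<Rightarrow> int \<Rightarrow> word" where
  "bs_relator m n = [(GT, True)] @ gpow GA m @ [(GT, False)] @ gpow GA (- n)"

inductive bs_eq :: "int \<Rightarrow> int \<Rightarrow> word \<Rightarrow> word \<Rightarrow> bool" for m n where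
  bs_refl: "bs_eq m n w w"
| bs_sym: "bs_eq m n u v \<Longrightarrow> bs_eq m n v u"
| bs_trans: "bs_eq m n u v \<Longrightarrow> bs_eq m n v w \<Longrightarrow> bs_eq m n u w"
| bs_cancel: "bs_eq m n (u @ [x, inv_letter x] @ v) (u @ v)"
| bs_rel: "bs_eq m n (u @ bs_relator m n @ v) (u @ v)"

type_synonym bs_elem = "word set"

definition bs_cls :: "int \<Rightarrow> int \<Rightarrow> word \<Rightarrow> bs_elem" where
  "bs_cls m n w = {v. bs_eq m n w v}"

definition aline :: "int \<Rightarrow> int \<Rightarrow> word \<Rightarrow> bs_elem set" where
  "aline m n w = {bs_cls m n (w @ gpow GA k) | k. True}"

definition tline :: "int \<Rightarrow> int \<Rightarrow> word \<Rightarrow> bs_elem set" where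
  "tline m n w = {bs_cls m n (w @ gpow GT k) | k. True}"

text \<open>Vertices of Lambda: tagged lines; tag True = type a, False = type t.\<close>
type_synonym lvert = "bool \<times> bs_elem set"

definition Lverts :: "int \<Rightarrow> int \<Rightarrow> lvert set" where
  "Lverts m n = {(True, aline m n w) | w. True} \<union> {(False, tline m n w) | w. True}"

definition lkL :: "int \<Rightarrow> int \<Rightarrow> lvert \<Rightarrow> lvert set" where
  "lkL m n u = {v \<in> Lverts m n. v \<noteq> u \<and> snd u \<inter> snd v \<noteq> {}}"

definition Tverts :: "int \<Rightarrow> int \<Rightarrow> bs_elem set set" where
  "Tverts m n = {aline m n w | w. True}"

definition Tedge :: "int \<Rightarrow> int \<Rightarrow> bs_elem set \<Rightarrow> bs_elem set \<Rightarrow> bool" where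
  "Tedge m n l l' \<longleftrightarrow> l \<in> Tverts m n \<and> l' \<in> Tverts m n \<and>
     (\<exists>w. bs_cls m n w \<in> l \<and> bs_cls m n (w @ [(GT, True)]) \<in> l')"

definition Tadj :: "int \<Rightarrow> int \<Rightarrow> bs_elem set \<Rightarrow> bs_elem set \<Rightarrow> bool" where
  "Tadj m n l l' \<longleftrightarrow> Tedge m n l l' \<or> Tedge m n l' l"

definition Tpath :: "int \<Rightarrow> int \<Rightarrow> bs_elem set list \<Rightarrow> bool" where
  "Tpath m n p \<longleftrightarrow> p \<noteq> [] \<and> set p \<subseteq> Tverts m n \<and>
     (\<forall>i. i + 1 < length p \<longrightarrow> Tadj m n (p ! i) (p ! (i + 1)))"

definition Tgeodesic :: "int \<Rightarrow> int \<Rightarrow> bs_elem set list \<Rightarrow> bs_elem set \<Rightarrow> bs_elem set \<Rightarrow> bool" where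
  "Tgeodesic m n p v1 v2 \<longleftrightarrow> Tpath m n p \<and> hd p = v1 \<and> last p = v2 \<and>
     (\<forall>q. Tpath m n q \<and> hd q = v1 \<and> last q = v2 \<longrightarrow> length p \<le> length q)"

definition Tle :: "int \<Rightarrow> int \<Rightarrow> bs_elem set \<Rightarrow> bs_elem set \<Rightarrow> bool" where
  "Tle m n v1 v2 \<longleftrightarrow> v1 \<in> Tverts m n \<and> v2 \<in> Tverts m n \<and>
     (\<exists>p. Tgeodesic m n p v1 v2) \<and>
     (\<forall>p. Tgeodesic m n p v1 v2 \<longrightarrow>
        (\<forall>i. i + 1 < length p \<longrightarrow> Tedge m n (p ! i) (p ! (i + 1))))"

definition Tless :: "int \<Rightarrow> int \<Rightarrow> bs_elem set \<Rightarrow> bs_elem set \<Rightarrow> bool" where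
  "Tless m n v1 v2 \<longleftrightarrow> Tle m n v1 v2 \<and> v1 \<noteq> v2"

end

theory Submission
  imports Defs
begin

text \<open>
  The a-lines are the left cosets g\<langle>a\<rangle>, i.e. the vertices of T. They are described by
  Britton's normal form a^r1 t^e1 ... a^rk t^ek \<langle>a\<rangle>. Words act on normal forms letter
  by letter (van der Waerden's trick); the action respects the defining relation, so two words
  lie in the same a-line iff they send the empty normal form to the same one. An a-vertex of
  Lambda is adjacent only to t-lines, and the t-line h\<langle>t\<rangle> meets exactly the a-lines
  h t^j \<langle>a\<rangle>.

  If g\<langle>a\<rangle> and g t\<langle>a\<rangle> are adjacent in T, then, as a^n t = t a^m, every t-line
  g a^(i n) \<langle>t\<rangle> is a common neighbour. An a-line meeting both g\<langle>t\<rangle> and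
  g a^n \<langle>t\<rangle> is g t^k \<langle>a\<rangle> = g a^n t^l \<langle>a\<rangle>, and |m| < |n| together with m not
  dividing n forces k \<in> {0, 1}. Distinct non-adjacent a-vertices with a common neighbour are
  g\<langle>a\<rangle> and g t^d \<langle>a\<rangle> with |d| \<ge> 2. Any common neighbour h\<langle>t\<rangle> satisfies
  h t^j = g a^c with a^c t^d \<langle>a\<rangle> = t^d \<langle>a\<rangle>, hence a^c t^(sgn d) \<langle>a\<rangle> = t^(sgn d) \<langle>a\<rangle>,
  so it also meets g t^(sgn d) \<langle>a\<rangle>. Without a common neighbour any t-vertex will do.
\<close>

section \<open>Computing with words\<close>

declare bs_eq.bs_trans [trans]

lemma bs_eq_append_cong: "bs_eq m n u v \<Longrightarrow> bs_eq m n (p @ u @ q) (p @ v @ q)"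
proof (induction arbitrary: p q rule: bs_eq.induct)
  case (bs_refl w)
  show ?case by (rule bs_eq.bs_refl)
next
  case (bs_sym u v)
  then show ?case by (simp add: bs_eq.bs_sym)
next
  case (bs_trans u v w)
  then show ?case by (meson bs_eq.bs_trans)
next
  case (bs_cancel u x v)
  show ?case using bs_eq.bs_cancel[of m n "p @ u" x "v @ q"] by simp
next
  case (bs_rel u v)
  show ?case using bs_eq.bs_rel[of m n "p @ u" "v @ q"] by simp
qed

lemma bs_eq_append_left: "bs_eq m n u v \<Longrightarrow> bs_eq m n (p @ u) (p @ v)"
  using bs_eq_append_cong[of m n u v p "[]"] by simp

lemma bs_eq_append_right: "bs_eq m n u v \<Longrightarrow> bs_eq m n (u @ q) (v @ q)"
  using bs_eq_append_cong[of m n u v "[]" q] by simp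

lemma bs_cls_eq_iff: "bs_cls m n u = bs_cls m n v \<longleftrightarrow> bs_eq m n u v"
proof
  assume "bs_cls m n u = bs_cls m n v"
  then show "bs_eq m n u v"
    unfolding bs_cls_def by (metis bs_eq.bs_refl mem_Collect_eq)
next
  assume "bs_eq m n u v"
  then show "bs_cls m n u = bs_cls m n v"
    unfolding bs_cls_def by (auto intro: bs_trans bs_sym)
qed

lemma inv_letter_inv_letter [simp]: "inv_letter (inv_letter x) = x"
  by (simp add: inv_letter_def)

lemma gpow_0 [simp]: "gpow s 0 = []"
  and gpow_1 [simp]: "gpow s 1 = [(s, True)]"
  and gpow_minus_1 [simp]: "gpow s (-1) = [(s, False)]"
  by (simp_all add: gpow_def)

lemma bs_eq_gpow_append_pos: "bs_eq m n (gpow s i @ [(s, True)]) (gpow s (i + 1))"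
proof (cases "i \<ge> 0")
  case True
  then have "nat \<bar>i + 1\<bar> = Suc (nat \<bar>i\<bar>)" by simp
  then show ?thesis using True by (simp add: gpow_def replicate_append_same bs_refl)
next
  case False
  then obtain j where j: "nat \<bar>i\<bar> = Suc j" "nat \<bar>i + 1\<bar> = j"
    by (intro that[of "nat \<bar>i\<bar> - 1"]) auto
  have "gpow s i @ [(s, True)] = replicate j (s, False) @ [(s, False), inv_letter (s, False)] @ []"
    using False j by (simp add: gpow_def inv_letter_def replicate_append_same[symmetric])
  also have "bs_eq m n \<dots> (replicate j (s, False) @ [])" by (rule bs_cancel)
  also have "replicate j (s, False) @ [] = gpow s (i + 1)"
    using False j by (auto simp: gpow_def)
  finally show ?thesis .
qed

lemma bs_eq_gpow_append_neg: "bs_eq m n (gpow s i @ [(s, False)]) (gpow s (i - 1))"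
proof (cases "i \<le> 0")
  case True
  then have "nat \<bar>i - 1\<bar> = Suc (nat \<bar>i\<bar>)" by simp
  then show ?thesis using True
    by (cases "i = 0") (simp_all add: gpow_def replicate_append_same bs_refl)
next
  case False
  then obtain j where j: "nat \<bar>i\<bar> = Suc j" "nat \<bar>i - 1\<bar> = j"
    by (intro that[of "nat \<bar>i\<bar> - 1"]) auto
  have "gpow s i @ [(s, False)] = replicate j (s, True) @ [(s, True), inv_letter (s, True)] @ []"
    using False j by (simp add: gpow_def inv_letter_def replicate_append_same[symmetric])
  also have "bs_eq m n \<dots> (replicate j (s, True) @ [])" by (rule bs_cancel)
  also have "replicate j (s, True) @ [] = gpow s (i - 1)"
    using False j by (auto simp: gpow_def)
  finally show ?thesis .
qed

lemma bs_eq_gpow_add: "bs_eq m n (gpow s i @ gpow s j) (gpow s (i + j))"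
proof (induction j rule: int_induct[where k = 0])
  case base
  show ?case by (simp add: bs_refl)
next
  case (step1 j)
  have "gpow s (j + 1) = gpow s j @ [(s, True)]"
    using step1 by (simp add: gpow_def nat_add_distrib replicate_append_same)
  then have "gpow s i @ gpow s (j + 1) = (gpow s i @ gpow s j) @ [(s, True)]" by simp
  also have "bs_eq m n \<dots> (gpow s (i + j) @ [(s, True)])"
    using step1(2) by (rule bs_eq_append_right)
  also have "bs_eq m n \<dots> (gpow s (i + j + 1))" by (rule bs_eq_gpow_append_pos)
  finally show ?case by (simp add: add.assoc)
next
  case (step2 j)
  have "nat \<bar>j - 1\<bar> = Suc (nat \<bar>j\<bar>)" using step2(1) by simp
  then have "gpow s (j - 1) = gpow s j @ [(s, False)]" using step2(1)
    by (cases "j = 0") (simp_all add: gpow_def replicate_append_same)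
  then have "gpow s i @ gpow s (j - 1) = (gpow s i @ gpow s j) @ [(s, False)]" by simp
  also have "bs_eq m n \<dots> (gpow s (i + j) @ [(s, False)])"
    using step2(2) by (rule bs_eq_append_right)
  also have "bs_eq m n \<dots> (gpow s (i + j - 1))" by (rule bs_eq_gpow_append_neg)
  finally show ?case by (simp add: algebra_simps)
qed

lemma bs_eq_gpow_cancel: "bs_eq m n (gpow s (- i) @ gpow s i) []"
  using bs_eq_gpow_add[of m n s "- i" i] by simp

lemma bs_eq_gpow_cancel': "bs_eq m n (gpow s i @ gpow s (- i)) []"
  using bs_eq_gpow_add[of m n s i "- i"] by simp

lemma gpow_conj_uminus:
  assumes "bs_eq m n (gpow s p @ y) (y @ gpow s q)"
  shows "bs_eq m n (gpow s (- p) @ y) (y @ gpow s (- q))"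
proof -
  have "bs_eq m n (gpow s (- p) @ y) (gpow s (- p) @ y @ gpow s q @ gpow s (- q))"
    using bs_eq_append_cong[OF bs_eq_gpow_cancel'[of m n s q], of "gpow s (- p) @ y" "[]"]
    by (simp add: bs_sym)
  also have "bs_eq m n \<dots> (gpow s (- p) @ gpow s p @ y @ gpow s (- q))"
    using bs_eq_append_cong[OF bs_sym[OF assms], of "gpow s (- p)" "gpow s (- q)"] by simp
  also have "bs_eq m n \<dots> (y @ gpow s (- q))"
    using bs_eq_append_right[OF bs_eq_gpow_cancel[of m n s p], of "y @ gpow s (- q)"] by simp
  finally show ?thesis .
qed

lemma gpow_conj_mult:
  assumes "bs_eq m n (gpow s p @ y) (y @ gpow s q)"
  shows "bs_eq m n (gpow s (j * p) @ y) (y @ gpow s (j * q))"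
proof (induction j rule: int_induct[where k = 0])
  case base
  show ?case by (simp add: bs_refl)
next
  case (step1 j)
  have "bs_eq m n (gpow s ((j + 1) * p) @ y) (gpow s (j * p) @ gpow s p @ y)"
    using bs_eq_append_right[OF bs_sym[OF bs_eq_gpow_add[of m n s "j * p" p]], of y]
    by (simp add: distrib_right)
  also have "bs_eq m n \<dots> (gpow s (j * p) @ y @ gpow s q)"
    using bs_eq_append_left[OF assms] .
  also have "bs_eq m n \<dots> (y @ gpow s (j * q) @ gpow s q)"
    using bs_eq_append_right[OF step1(2), of "gpow s q"] by simp
  also have "bs_eq m n \<dots> (y @ gpow s ((j + 1) * q))"
    using bs_eq_append_left[OF bs_eq_gpow_add[of m n s "j * q" q]] by (simp add: distrib_right)
  finally show ?case .
next
  case (step2 j)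
  have "bs_eq m n (gpow s ((j - 1) * p) @ y) (gpow s (j * p) @ gpow s (- p) @ y)"
    using bs_eq_append_right[OF bs_sym[OF bs_eq_gpow_add[of m n s "j * p" "- p"]], of y]
    by (simp add: left_diff_distrib)
  also have "bs_eq m n \<dots> (gpow s (j * p) @ y @ gpow s (- q))"
    using bs_eq_append_left[OF gpow_conj_uminus[OF assms]] .
  also have "bs_eq m n \<dots> (y @ gpow s (j * q) @ gpow s (- q))"
    using bs_eq_append_right[OF step2(2), of "gpow s (- q)"] by simp
  also have "bs_eq m n \<dots> (y @ gpow s ((j - 1) * q))"
    using bs_eq_append_left[OF bs_eq_gpow_add[of m n s "j * q" "- q"]] by (simp add: left_diff_distrib)
  finally show ?case .
qed

lemma a_pow_n_t_conj: "bs_eq m n (gpow GA n @ [(GT, True)]) ([(GT, True)] @ gpow GA m)"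
proof -
  have "bs_eq m n (gpow GA n @ [(GT, True)])
      ([(GT, True)] @ gpow GA m @ [(GT, False)] @ (gpow GA (- n) @ gpow GA n) @ [(GT, True)])"
    using bs_rel[of m n "[]" "gpow GA n @ [(GT, True)]"] by (simp add: bs_relator_def bs_sym)
  also have "bs_eq m n \<dots> (([(GT, True)] @ gpow GA m) @ [(GT, False), inv_letter (GT, False)] @ [])"
    using bs_eq_append_cong[OF bs_eq_gpow_cancel, where p = "[(GT, True)] @ gpow GA m @ [(GT, False)]"]
    by (simp add: inv_letter_def)
  also have "bs_eq m n \<dots> ([(GT, True)] @ gpow GA m)"
    using bs_cancel[where u = "[(GT, True)] @ gpow GA m" and v = "[]"] by simp
  finally show ?thesis .
qed

lemma a_pow_m_t_inv_conj: "bs_eq m n (gpow GA m @ [(GT, False)]) ([(GT, False)] @ gpow GA n)"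
proof -
  have "bs_eq m n (gpow GA m @ [(GT, False)]) ([] @ [(GT, False), inv_letter (GT, False)] @ gpow GA m @ [(GT, False)])"
    using bs_sym[OF bs_cancel[where u = "[]"]] by simp
  also have "bs_eq m n \<dots> ([(GT, False)] @ (gpow GA n @ [(GT, True)]) @ [(GT, False)])"
    using bs_eq_append_cong[OF bs_sym[OF a_pow_n_t_conj], where p = "[(GT, False)]" and q = "[(GT, False)]"]
    by (simp add: inv_letter_def)
  also have "bs_eq m n \<dots> (([(GT, False)] @ gpow GA n) @ [(GT, True), inv_letter (GT, True)] @ [])"
    by (simp add: inv_letter_def bs_refl)
  also have "bs_eq m n \<dots> ([(GT, False)] @ gpow GA n)"
    using bs_cancel[where u = "[(GT, False)] @ gpow GA n" and v = "[]"] by simp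
  finally show ?thesis .
qed

lemma a_pow_t_letter_conj:
  "bs_eq m n (gpow GA (q * \<bar>if e then n else m\<bar>) @ [(GT, e)])
     ([(GT, e)] @ gpow GA (q * sgn (if e then n else m) * (if e then m else n)))"
proof -
  have "q * \<bar>k\<bar> = (q * sgn k) * k" for k :: int
    by (simp add: abs_sgn mult.assoc)
  then show ?thesis
    using gpow_conj_mult[OF a_pow_n_t_conj, where j = "q * sgn n"]
      gpow_conj_mult[OF a_pow_m_t_inv_conj, where j = "q * sgn m"]
    by (cases e) (simp_all only: if_True if_False append_Cons append_Nil)
qed

section \<open>Normal forms of the cosets of \<langle>a\<rangle>\<close>

fun nf_word :: "(int \<times> bool) list \<Rightarrow> word" where
  "nf_word [] = []"
| "nf_word ((r, e) # s) = gpow GA r @ [(GT, e)] @ nf_word s"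

text \<open>The list s encodes the coset (nf_word s)\<langle>a\<rangle>, where t^True = t and t^False = t^-1.
  It is in Britton's normal form if the exponent of a is reduced modulo |n| before t and modulo
  |m| before t^-1, and there is no subword t^e t^-e.\<close>

fun is_nf :: "int \<Rightarrow> int \<Rightarrow> (int \<times> bool) list \<Rightarrow> bool" where
  "is_nf m n [] \<longleftrightarrow> True"
| "is_nf m n ((r, e) # s) \<longleftrightarrow>
     0 \<le> r \<and> r < \<bar>if e then n else m\<bar> \<and> is_nf m n s \<and> (s = [] \<or> hd s \<noteq> (0, \<not> e))"

text \<open>The carry moves past t^e by a^(q |M|) t^e = t^e a^(q sgn M M'), where (M, M') is (n, m)
  for t and (m, n) for t^-1.\<close>

fun a_act :: "int \<Rightarrow> int \<Rightarrow> int \<Rightarrow> (int \<times> bool) list \<Rightarrow> (int \<times> bool) list" where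
  "a_act m n k [] = []"
| "a_act m n k ((r, e) # s) =
     ((r + k) mod \<bar>if e then n else m\<bar>, e) #
     a_act m n ((r + k) div \<bar>if e then n else m\<bar> * sgn (if e then n else m) * (if e then m else n)) s"

definition t_act :: "bool \<Rightarrow> (int \<times> bool) list \<Rightarrow> (int \<times> bool) list" where
  "t_act e s = (if s \<noteq> [] \<and> hd s = (0, \<not> e) then tl s else (0, e) # s)"

definition letter_act :: "int \<Rightarrow> int \<Rightarrow> letter \<Rightarrow> (int \<times> bool) list \<Rightarrow> (int \<times> bool) list" where
  "letter_act m n x = (case fst x of GA \<Rightarrow> a_act m n (if snd x then 1 else -1) | GT \<Rightarrow> t_act (snd x))"

definition word_act :: "int \<Rightarrow> int \<Rightarrow> word \<Rightarrow> (int \<times> bool) list \<Rightarrow> (int \<times> bool) list" where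
  "word_act m n w s = foldr (letter_act m n) w s"

abbreviation coset_nf :: "int \<Rightarrow> int \<Rightarrow> word \<Rightarrow> (int \<times> bool) list" where
  "coset_nf m n w \<equiv> word_act m n w []"

lemma word_act_Nil [simp]: "word_act m n [] s = s"
  by (simp add: word_act_def)

lemma word_act_Cons: "word_act m n (x # w) s = letter_act m n x (word_act m n w s)"
  by (simp add: word_act_def)

lemma word_act_append: "word_act m n (u @ v) s = word_act m n u (word_act m n v s)"
  by (simp add: word_act_def)

lemma a_act_add: "a_act m n k (a_act m n j s) = a_act m n (j + k) s"
proof (induction s arbitrary: j k)
  case Nil
  show ?case by simp
next
  case (Cons x s)
  obtain r e where x: "x = (r, e)" by (cases x)
  define M where "M = \<bar>if e then n else m\<bar>"
  define S where "S = sgn (if e then n else m) * (if e then m else n)"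
  have "(r + j) div M + ((r + j) mod M + k) div M = (r + (j + k)) div M" if "M \<noteq> 0"
  proof -
    have "r + (j + k) = ((r + j) mod M + k) + (r + j) div M * M" by simp
    then show ?thesis using that by (metis div_mult_self1)
  qed
  then have "(r + j) div M * S + ((r + j) mod M + k) div M * S = (r + (j + k)) div M * S"
    by (cases "M = 0") (simp_all flip: distrib_right)
  moreover have "((r + j) mod M + k) mod M = (r + (j + k)) mod M"
    by (simp add: mod_add_left_eq add.assoc)
  ultimately show ?case
    using Cons by (simp add: x M_def[symmetric] S_def[symmetric] mult.assoc)
qed

lemma a_act_0: "is_nf m n s \<Longrightarrow> a_act m n 0 s = s"
proof (induction s)
  case (Cons x s)
  then show ?case by (cases x) auto
qed simp

lemma map_snd_a_act: "map snd (a_act m n k s) = map snd s"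
  by (induction m n k s rule: a_act.induct) simp_all

lemma t_act_inverse: "is_nf m n s \<Longrightarrow> t_act (\<not> e) (t_act e s) = s"
  by (cases s) (auto simp: t_act_def)

lemma letter_act_inv_letter:
  assumes "is_nf m n s"
  shows "letter_act m n (inv_letter x) (letter_act m n x s) = s"
  using assms t_act_inverse[OF assms, of True] t_act_inverse[OF assms, of False]
  by (cases x; cases "fst x"; cases "snd x")
    (simp_all add: letter_act_def inv_letter_def a_act_add a_act_0)

lemma word_act_gpow_GA: "is_nf m n s \<Longrightarrow> word_act m n (gpow GA k) s = a_act m n k s"
proof -
  assume s: "is_nf m n s"
  have "word_act m n (replicate j (GA, b)) s = a_act m n (if b then int j else - int j) s" for j b
    using s by (induction j) (auto simp: a_act_0 word_act_Cons letter_act_def a_act_add algebra_simps)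
  then show ?thesis
    by (simp add: gpow_def)
qed

lemma word_act_append_gpow_GA:
  "is_nf m n s \<Longrightarrow> word_act m n (g @ gpow GA k) s = word_act m n g (a_act m n k s)"
  by (simp add: word_act_append word_act_gpow_GA)

lemma a_act_nf_word: "\<exists>k'. bs_eq m n (gpow GA k @ nf_word s) (nf_word (a_act m n k s) @ gpow GA k')"
proof (induction s arbitrary: k)
  case Nil
  show ?case by (auto intro: bs_refl)
next
  case (Cons x s)
  obtain r e where x: "x = (r, e)" by (cases x)
  define M where "M = (if e then n else m)"
  define N where "N = (if e then m else n)"
  define r' where "r' = (r + k) mod \<bar>M\<bar>"
  define q where "q = (r + k) div \<bar>M\<bar>"
  define c where "c = q * sgn M * N"
  obtain k' where IH: "bs_eq m n (gpow GA c @ nf_word s) (nf_word (a_act m n c s) @ gpow GA k')"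
    using Cons.IH by blast
  have "gpow GA k @ nf_word (x # s) = (gpow GA k @ gpow GA r) @ [(GT, e)] @ nf_word s"
    by (simp add: x)
  also have "bs_eq m n \<dots> (gpow GA (r' + q * \<bar>M\<bar>) @ [(GT, e)] @ nf_word s)"
    using bs_eq_append_right[OF bs_eq_gpow_add[of m n GA k r]]
    by (simp add: r'_def q_def add.commute)
  also have "bs_eq m n \<dots> (gpow GA r' @ (gpow GA (q * \<bar>M\<bar>) @ [(GT, e)]) @ nf_word s)"
    using bs_eq_append_right[OF bs_sym[OF bs_eq_gpow_add]] by simp
  also have "bs_eq m n \<dots> (gpow GA r' @ ([(GT, e)] @ gpow GA c) @ nf_word s)"
    unfolding c_def M_def N_def by (rule bs_eq_append_cong, rule a_pow_t_letter_conj)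
  also have "\<dots> = (gpow GA r' @ [(GT, e)]) @ gpow GA c @ nf_word s"
    by simp
  also have "bs_eq m n \<dots> ((gpow GA r' @ [(GT, e)]) @ nf_word (a_act m n c s) @ gpow GA k')"
    using IH by (rule bs_eq_append_left)
  also have "\<dots> = nf_word (a_act m n k (x # s)) @ gpow GA k'"
    by (simp add: x M_def N_def c_def r'_def q_def)
  finally show ?case by blast
qed

lemma letter_act_nf_word:
  "\<exists>k. bs_eq m n (x # nf_word s) (nf_word (letter_act m n x s) @ gpow GA k)"
proof (cases "fst x")
  case GA
  then show ?thesis
    using a_act_nf_word[of m n "if snd x then 1 else -1" s]
    by (cases x; cases "snd x") (simp_all add: letter_act_def)
next
  case GT
  show ?thesis
  proof (cases "s \<noteq> [] \<and> hd s = (0, \<not> snd x)")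
    case True
    then obtain s' where s: "s = (0, \<not> snd x) # s'" by (cases s) auto
    have "bs_eq m n ([] @ [x, inv_letter x] @ nf_word s') ([] @ nf_word s')"
      by (rule bs_cancel)
    then have "bs_eq m n (x # nf_word s) (nf_word (letter_act m n x s) @ gpow GA 0)"
      using GT by (simp add: s letter_act_def t_act_def inv_letter_def)
    then show ?thesis by blast
  next
    case False
    then have "x # nf_word s = nf_word (letter_act m n x s) @ gpow GA 0"
      using GT by (cases x) (auto simp: letter_act_def t_act_def)
    then show ?thesis by (metis bs_refl)
  qed
qed

lemma bs_eq_nf_word: "\<exists>k. bs_eq m n w (nf_word (coset_nf m n w) @ gpow GA k)"
proof (induction w)
  case Nil
  show ?case by (rule exI[of _ 0]) (simp add: bs_refl)
next
  case (Cons x w)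
  obtain k where k: "bs_eq m n w (nf_word (coset_nf m n w) @ gpow GA k)"
    using Cons by blast
  obtain k' where k': "bs_eq m n (x # nf_word (coset_nf m n w))
      (nf_word (coset_nf m n (x # w)) @ gpow GA k')"
    using letter_act_nf_word by (fastforce simp: word_act_Cons)
  have "bs_eq m n ([x] @ w) ([x] @ nf_word (coset_nf m n w) @ gpow GA k)"
    using k by (rule bs_eq_append_left)
  also have "bs_eq m n \<dots> ((nf_word (coset_nf m n (x # w)) @ gpow GA k') @ gpow GA k)"
    using bs_eq_append_right[OF k'] by simp
  also have "bs_eq m n \<dots> (nf_word (coset_nf m n (x # w)) @ gpow GA (k' + k))"
    using bs_eq_append_left[OF bs_eq_gpow_add] by simp
  finally show ?case by auto
qed

lemma div_abs_mult_sgn: "k \<noteq> 0 \<Longrightarrow> k div \<bar>k\<bar> * sgn k = (1 :: int)"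
  by (metis abs_eq_0 nonzero_mult_div_cancel_right sgn_mult_abs sgn_if mult_minus_left minus_minus mult_1)

lemma add_mod_div_abs_self:
  fixes r n :: int
  assumes "0 \<le> r" and "r < \<bar>n\<bar>"
  shows "(r + n) mod \<bar>n\<bar> = r" and "(r + n) div \<bar>n\<bar> = sgn n"
proof -
  have "(r + sgn n * \<bar>n\<bar>) mod \<bar>n\<bar> = r"
    using assms by (subst mod_mult_self1) auto
  moreover have "(r + sgn n * \<bar>n\<bar>) div \<bar>n\<bar> = sgn n"
    using assms by (subst div_mult_self1) auto
  ultimately show "(r + n) mod \<bar>n\<bar> = r" and "(r + n) div \<bar>n\<bar> = sgn n"
    by (simp_all add: sgn_mult_abs)
qed

definition t_pow_nf :: "int \<Rightarrow> (int \<times> bool) list" where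
  "t_pow_nf k = replicate (nat \<bar>k\<bar>) (0, 0 \<le> k)"

lemma coset_nf_gpow_GT: "coset_nf m n (gpow GT k) = t_pow_nf k"
proof -
  have "coset_nf m n (replicate j (GT, b)) = replicate j (0, b)" for j b
    by (induction j) (auto simp: word_act_Cons letter_act_def t_act_def)
  then show ?thesis
    by (simp add: gpow_def t_pow_nf_def)
qed

lemma coset_nf_append_gpow_GT: "coset_nf m n (h @ gpow GT k) = word_act m n h (t_pow_nf k)"
  by (simp add: word_act_append coset_nf_gpow_GT)

lemma t_pow_nf_0 [simp]: "t_pow_nf 0 = []"
  and t_pow_nf_1 [simp]: "t_pow_nf 1 = [(0, True)]"
  by (simp_all add: t_pow_nf_def)

lemma t_pow_nf_pos: "0 < k \<Longrightarrow> t_pow_nf k = (0, True) # t_pow_nf (k - 1)"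
  by (simp add: t_pow_nf_def nat_diff_distrib' flip: replicate_Suc Suc_nat_eq_nat_zadd1)

lemma t_pow_nf_neg: "k < 0 \<Longrightarrow> t_pow_nf k = (0, False) # t_pow_nf (k + 1)"
proof -
  assume "k < 0"
  then have "nat \<bar>k\<bar> = Suc (nat \<bar>k + 1\<bar>)" by simp
  then show ?thesis using \<open>k < 0\<close> by (simp add: t_pow_nf_def)
qed

lemma fst_t_pow_nf: "x \<in> set (t_pow_nf k) \<Longrightarrow> fst x = 0"
  by (simp add: t_pow_nf_def)

lemma map_snd_t_pow_nf_inj: "map snd (t_pow_nf j) = map snd (t_pow_nf k) \<Longrightarrow> j = k"
  by (auto simp: t_pow_nf_def split: if_splits dest: arg_cong[of _ _ length])

lemma t_pow_nf_inj: "t_pow_nf j = t_pow_nf k \<Longrightarrow> j = k"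
  using map_snd_t_pow_nf_inj by metis

lemma a_act_fixes_t_pow_nf_sgn:
  assumes "a_act m n c (t_pow_nf k) = t_pow_nf k" and "k \<noteq> 0"
  shows "a_act m n c (t_pow_nf (sgn k)) = t_pow_nf (sgn k)"
proof (cases "k > 0")
  case True
  then have "c mod \<bar>n\<bar> = 0" using assms(1) t_pow_nf_pos[of k] by simp
  then show ?thesis using True by (simp add: t_pow_nf_def)
next
  case False
  then have "c mod \<bar>m\<bar> = 0" using assms t_pow_nf_neg[of k] by simp
  then show ?thesis using False assms(2) by (simp add: t_pow_nf_def)
qed

lemma a_act_n_t_pow_nf_eq_imp:
  assumes "m \<noteq> 0" and "\<bar>m\<bar> < \<bar>n\<bar>" and "\<not> m dvd n"
    and eq: "a_act m n n (t_pow_nf k) = t_pow_nf k'"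
  shows "k' \<in> {0, 1}"
proof -
  have "k' = k"
    using eq map_snd_a_act map_snd_t_pow_nf_inj by metis
  have n_div: "n mod \<bar>n\<bar> = 0" "n div \<bar>n\<bar> * sgn n * m = m"
    using assms(2) div_abs_mult_sgn[of n] by auto
  consider "k \<in> {0, 1}" | "k \<ge> 2" | "k < 0" by fastforce
  then show ?thesis
  proof cases
    case 2
    then have "t_pow_nf k = (0, True) # (0, True) # t_pow_nf (k - 2)"
      using t_pow_nf_pos[of k] t_pow_nf_pos[of "k - 1"] by simp
    then have "(m mod \<bar>n\<bar>, True) \<in> set (t_pow_nf k')"
      using eq[symmetric] n_div by simp
    moreover have "m mod \<bar>n\<bar> \<noteq> 0"
      using assms(1,2) by (auto simp: mod_eq_0_iff_dvd dest: dvd_imp_le_int)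
    ultimately show ?thesis using fst_t_pow_nf by fastforce
  next
    case 3
    then have "(n mod \<bar>m\<bar>, False) \<in> set (t_pow_nf k')"
      using eq[symmetric] t_pow_nf_neg[of k] by simp
    moreover have "n mod \<bar>m\<bar> \<noteq> 0"
      using assms(3) by (simp add: mod_eq_0_iff_dvd)
    ultimately show ?thesis using fst_t_pow_nf by fastforce
  qed (use \<open>k' = k\<close> in simp)
qed

locale nonzero_exponents =
  fixes m n :: int
  assumes m_nonzero: "m \<noteq> 0" and n_nonzero: "n \<noteq> 0"
begin

lemma is_nf_a_act: "is_nf m n s \<Longrightarrow> is_nf m n (a_act m n k s)"
proof (induction s arbitrary: k)
  case (Cons x s)
  obtain r e where x: "x = (r, e)" by (cases x)
  define M where "M = (if e then n else m)"
  define N where "N = (if e then m else n)"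
  define c where "c = (r + k) div \<bar>M\<bar> * sgn M * N"
  have s: "is_nf m n s" and no_pinch: "s = [] \<or> hd s \<noteq> (0, \<not> e)"
    using Cons.prems by (auto simp: x)
  have "a_act m n c s = [] \<or> hd (a_act m n c s) \<noteq> (0, \<not> e)"
  proof (cases s)
    case (Cons y s')
    obtain r' e' where y: "y = (r', e')" by (cases y)
    show ?thesis
    proof (cases "e' = (\<not> e)")
      case True
      have r': "0 < r'" "r' < \<bar>N\<bar>"
        using s no_pinch by (auto simp: Cons y True N_def)
      have "c = ((r + k) div \<bar>M\<bar> * sgn M * sgn N) * \<bar>N\<bar>"
        by (simp add: c_def abs_sgn mult.assoc mult.left_commute)
      then have "(r' + c) mod \<bar>N\<bar> = r'"
        using r' by simp
      then show ?thesis using r' True by (auto simp: Cons y N_def)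
    qed (simp add: Cons y)
  qed simp
  moreover have "M \<noteq> 0"
    using m_nonzero n_nonzero by (simp add: M_def)
  ultimately show ?case
    using Cons.IH[OF s] by (simp add: x M_def N_def c_def)
qed simp

lemma is_nf_t_act: "is_nf m n s \<Longrightarrow> is_nf m n (t_act e s)"
  using m_nonzero n_nonzero by (cases s) (auto simp: t_act_def)

lemma is_nf_letter_act: "is_nf m n s \<Longrightarrow> is_nf m n (letter_act m n x s)"
  by (cases "fst x") (simp_all add: letter_act_def is_nf_a_act is_nf_t_act)

lemma is_nf_word_act: "is_nf m n s \<Longrightarrow> is_nf m n (word_act m n w s)"
  by (induction w) (simp_all add: word_act_Cons is_nf_letter_act)

lemma t_inv_a_act_commute: "is_nf m n s \<Longrightarrow> t_act False (a_act m n n s) = a_act m n m (t_act False s)"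
proof (cases s)
  case (Cons x s')
  assume s: "is_nf m n s"
  obtain r e where x: "x = (r, e)" by (cases x)
  have m_div: "m div \<bar>m\<bar> * sgn m = 1" and n_div: "n div \<bar>n\<bar> * sgn n = 1"
    using m_nonzero n_nonzero div_abs_mult_sgn by simp_all
  have a_act_m_t_inv: "a_act m n m ((0, False) # s) = (0, False) # a_act m n n s"
    using m_div by simp
  show ?thesis
  proof (cases e)
    case True
    have r: "0 \<le> r" "r < \<bar>n\<bar>" using s by (simp_all add: Cons x True)
    then have "a_act m n n s = (r, True) # a_act m n m s'"
      using add_mod_div_abs_self[OF r] n_nonzero by (simp add: Cons x True sgn_if)
    then show ?thesis
      using a_act_m_t_inv by (simp add: Cons x True t_act_def)
  next
    case False
    then show ?thesis
      using a_act_m_t_inv n_div by (simp add: Cons x t_act_def)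
  qed
qed (simp add: t_act_def)

lemma word_act_relator: "is_nf m n s \<Longrightarrow> word_act m n (bs_relator m n) s = s"
proof -
  assume s: "is_nf m n s"
  define s' where "s' = a_act m n (- n) s"
  have s': "is_nf m n s'" using s by (simp add: s'_def is_nf_a_act)
  have "a_act m n n s' = s" using s by (simp add: s'_def a_act_add a_act_0)
  then have "a_act m n m (t_act False s') = t_act False s"
    using t_inv_a_act_commute[OF s'] by simp
  moreover have "word_act m n (bs_relator m n) s = t_act True (a_act m n m (t_act False s'))"
    using s s' is_nf_t_act[OF s'] by (simp add: bs_relator_def word_act_append word_act_Cons
        word_act_gpow_GA s'_def letter_act_def)
  ultimately show ?thesis using t_act_inverse[OF s, of False] by simp
qed

lemma word_act_bs_eq: "bs_eq m n u v \<Longrightarrow> is_nf m n s \<Longrightarrow> word_act m n u s = word_act m n v s"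
proof (induction arbitrary: s rule: bs_eq.induct)
  case (bs_cancel u x v)
  then show ?case
    using letter_act_inv_letter[OF is_nf_word_act[OF bs_cancel], of "inv_letter x"]
    by (simp add: word_act_append word_act_Cons)
next
  case (bs_rel u v)
  then show ?case
    using word_act_relator[OF is_nf_word_act[OF bs_rel]] by (simp add: word_act_append)
qed simp_all

lemma word_act_inj:
  "is_nf m n s \<Longrightarrow> is_nf m n s' \<Longrightarrow> word_act m n w s = word_act m n w s' \<Longrightarrow> s = s'"
proof (induction w)
  case (Cons x w)
  then show ?case
    using letter_act_inv_letter[OF is_nf_word_act[OF Cons.prems(1)], of x w]
      letter_act_inv_letter[OF is_nf_word_act[OF Cons.prems(2)], of x w]
    by (metis word_act_Cons)
qed simp

lemma is_nf_t_pow_nf: "is_nf m n (t_pow_nf k)"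
proof -
  have "is_nf m n (replicate j (0, b))" for j b
    using m_nonzero n_nonzero by (induction j) auto
  then show ?thesis by (simp add: t_pow_nf_def)
qed

lemma word_act_gpow_GT_t_pow_nf: "word_act m n (gpow GT j) (t_pow_nf k) = t_pow_nf (j + k)"
  using word_act_bs_eq[OF bs_eq_gpow_add[of m n GT j k], of "[]"]
  by (simp add: word_act_append coset_nf_gpow_GT)

end

section \<open>Lines and links\<close>

lemma gpow_cosets_eq_if_meet:
  assumes "{bs_cls m n (v @ gpow s k) |k. True} \<inter> {bs_cls m n (w @ gpow s k) |k. True} \<noteq> {}"
  shows "{bs_cls m n (v @ gpow s k) |k. True} = {bs_cls m n (w @ gpow s k) |k. True}"
proof -
  have subset: "{bs_cls m n (v @ gpow s k) |k. True} \<subseteq> {bs_cls m n (w @ gpow s k) |k. True}"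
    if "bs_eq m n (v @ gpow s i) (w @ gpow s j)" for v w i j
  proof
    fix x
    assume "x \<in> {bs_cls m n (v @ gpow s k) |k. True}"
    then obtain k where x: "x = bs_cls m n (v @ gpow s k)" by blast
    have "bs_eq m n (v @ gpow s k) ((v @ gpow s i) @ gpow s (k - i))"
      using bs_eq_append_left[OF bs_sym[OF bs_eq_gpow_add[of m n s i "k - i"]], of v] by simp
    also have "bs_eq m n \<dots> (w @ gpow s j @ gpow s (k - i))"
      using bs_eq_append_right[OF that] by simp
    also have "bs_eq m n \<dots> (w @ gpow s (j + (k - i)))"
      by (rule bs_eq_append_left, rule bs_eq_gpow_add)
    finally have "x = bs_cls m n (w @ gpow s (j + (k - i)))"
      using x by (simp add: bs_cls_eq_iff)
    then show "x \<in> {bs_cls m n (w @ gpow s k) |k. True}" by blast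
  qed
  obtain i j where "bs_eq m n (v @ gpow s i) (w @ gpow s j)"
    using assms by (auto simp: bs_cls_eq_iff)
  then show ?thesis
    using subset bs_sym by blast
qed

lemma bs_cls_mem_aline: "bs_cls m n w \<in> aline m n w"
  unfolding aline_def by (rule CollectI, rule exI[of _ 0]) simp

lemma lkL_fst_neq:
  assumes "u \<in> Lverts m n" and "v \<in> lkL m n u"
  shows "fst v \<noteq> fst u"
proof
  assume same_type: "fst v = fst u"
  have v: "v \<in> Lverts m n" "v \<noteq> u" and meet: "snd u \<inter> snd v \<noteq> {}"
    using assms(2) by (auto simp: lkL_def)
  consider (a) w w' where "u = (True, aline m n w)" "v = (True, aline m n w')"
    | (t) w w' where "u = (False, tline m n w)" "v = (False, tline m n w')"
    using assms(1) v(1) same_type unfolding Lverts_def by auto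
  then show False
  proof cases
    case a
    then show False
      using v(2) meet gpow_cosets_eq_if_meet[of m n w GA w'] by (simp add: aline_def)
  next
    case t
    then show False
      using v(2) meet gpow_cosets_eq_if_meet[of m n w GT w'] by (simp add: tline_def)
  qed
qed

context nonzero_exponents
begin

lemma mem_aline_iff: "bs_cls m n v \<in> aline m n w \<longleftrightarrow> coset_nf m n v = coset_nf m n w"
proof
  assume "bs_cls m n v \<in> aline m n w"
  then obtain k where "bs_eq m n v (w @ gpow GA k)"
    by (auto simp: aline_def bs_cls_eq_iff)
  then show "coset_nf m n v = coset_nf m n w"
    using word_act_bs_eq by (simp add: word_act_append word_act_gpow_GA)
next
  assume same: "coset_nf m n v = coset_nf m n w"
  obtain k where k: "bs_eq m n v (nf_word (coset_nf m n v) @ gpow GA k)"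
    using bs_eq_nf_word by blast
  obtain k' where k': "bs_eq m n w (nf_word (coset_nf m n v) @ gpow GA k')"
    using bs_eq_nf_word same by metis
  have "bs_eq m n (w @ gpow GA (k - k')) (nf_word (coset_nf m n v) @ gpow GA k' @ gpow GA (k - k'))"
    using bs_eq_append_right[OF k'] by simp
  also have "bs_eq m n \<dots> (nf_word (coset_nf m n v) @ gpow GA k)"
    using bs_eq_append_left[OF bs_eq_gpow_add[of m n GA k' "k - k'"]] by simp
  also have "bs_eq m n \<dots> v"
    using k by (rule bs_sym)
  finally have "bs_cls m n (w @ gpow GA (k - k')) = bs_cls m n v"
    by (simp add: bs_cls_eq_iff)
  then show "bs_cls m n v \<in> aline m n w"
    unfolding aline_def by blast
qed

lemma aline_eq_iff: "aline m n v = aline m n w \<longleftrightarrow> coset_nf m n v = coset_nf m n w"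
proof
  assume "aline m n v = aline m n w"
  then show "coset_nf m n v = coset_nf m n w"
    using bs_cls_mem_aline[of m n v] by (simp add: mem_aline_iff)
next
  assume "coset_nf m n v = coset_nf m n w"
  then have "bs_cls m n v \<in> aline m n v \<inter> aline m n w"
    using bs_cls_mem_aline mem_aline_iff by blast
  then show "aline m n v = aline m n w"
    using gpow_cosets_eq_if_meet[of m n v GA w] unfolding aline_def by blast
qed

lemma word_act_same_coset:
  assumes "coset_nf m n h = coset_nf m n g"
  obtains c where "\<And>s. is_nf m n s \<Longrightarrow> word_act m n h s = word_act m n g (a_act m n c s)"
proof -
  have "bs_cls m n h \<in> aline m n g"
    using assms by (simp add: mem_aline_iff)
  then obtain c where "bs_eq m n h (g @ gpow GA c)"
    by (auto simp: aline_def bs_cls_eq_iff)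
  then show ?thesis
    using that word_act_bs_eq by (simp add: word_act_append word_act_gpow_GA)
qed

lemma aline_t_pow_eq_iff: "aline m n (g @ gpow GT j) = aline m n (g @ gpow GT k) \<longleftrightarrow> j = k"
  using word_act_inj[OF is_nf_t_pow_nf is_nf_t_pow_nf] t_pow_nf_inj
  by (auto simp: aline_eq_iff coset_nf_append_gpow_GT)

lemma tline_mem_lkL_aline_iff:
  "(False, tline m n h) \<in> lkL m n (True, aline m n w) \<longleftrightarrow>
     (\<exists>j. word_act m n h (t_pow_nf j) = coset_nf m n w)"
proof -
  have "(False, tline m n h) \<in> Lverts m n"
    by (auto simp: Lverts_def)
  moreover have "aline m n w \<inter> tline m n h \<noteq> {} \<longleftrightarrow> (\<exists>j. bs_cls m n (h @ gpow GT j) \<in> aline m n w)"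
    unfolding tline_def by blast
  ultimately show ?thesis
    by (simp add: lkL_def mem_aline_iff coset_nf_append_gpow_GT)
qed

lemma mem_lkL_aline_iff:
  "v \<in> lkL m n (True, aline m n w) \<longleftrightarrow>
     (\<exists>h. v = (False, tline m n h) \<and> (\<exists>j. word_act m n h (t_pow_nf j) = coset_nf m n w))"
proof
  assume v: "v \<in> lkL m n (True, aline m n w)"
  have "(True, aline m n w) \<in> Lverts m n"
    by (auto simp: Lverts_def)
  then have "\<not> fst v"
    using lkL_fst_neq v by fastforce
  moreover have "v \<in> Lverts m n"
    using v by (simp add: lkL_def)
  ultimately obtain h where "v = (False, tline m n h)"
    by (auto simp: Lverts_def)
  then show "\<exists>h. v = (False, tline m n h) \<and> (\<exists>j. word_act m n h (t_pow_nf j) = coset_nf m n w)"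
    using v tline_mem_lkL_aline_iff by blast
qed (use tline_mem_lkL_aline_iff in blast)

lemma Tedge_aline_iff:
  "Tedge m n (aline m n w1) (aline m n w2) \<longleftrightarrow>
     (\<exists>g. aline m n w1 = aline m n g \<and> aline m n w2 = aline m n (g @ gpow GT 1))"
proof -
  have "bs_cls m n g \<in> aline m n w \<longleftrightarrow> aline m n w = aline m n g" for g w
    by (auto simp: mem_aline_iff aline_eq_iff)
  then show ?thesis
    by (auto simp: Tedge_def Tverts_def)
qed

lemma Tadj_aline_t_pow:
  assumes "\<bar>d\<bar> = 1"
  shows "Tadj m n (aline m n g) (aline m n (g @ gpow GT d))"
proof (cases "d = 1")
  case True
  then show ?thesis
    by (auto simp: Tadj_def Tedge_aline_iff)
next
  case False
  then have "d = -1" using assms by auto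
  have "coset_nf m n ((g @ gpow GT (-1)) @ gpow GT 1) = coset_nf m n g"
    by (simp only: word_act_append coset_nf_gpow_GT word_act_gpow_GT_t_pow_nf) simp
  then have "aline m n g = aline m n ((g @ gpow GT d) @ gpow GT 1)"
    using \<open>d = -1\<close> aline_eq_iff by presburger
  then have "Tedge m n (aline m n (g @ gpow GT d)) (aline m n g)"
    unfolding Tedge_aline_iff by blast
  then show ?thesis
    by (simp add: Tadj_def)
qed

lemma common_neighbour_imp_t_pow:
  assumes "lkL m n (True, aline m n w1) \<inter> lkL m n (True, aline m n w2) \<noteq> {}"
  obtains g d where "aline m n w1 = aline m n g" and "aline m n w2 = aline m n (g @ gpow GT d)"
proof -
  obtain v where v1: "v \<in> lkL m n (True, aline m n w1)" and v2: "v \<in> lkL m n (True, aline m n w2)"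
    using assms by blast
  from v1 obtain h j1 where v: "v = (False, tline m n h)"
    and j1: "word_act m n h (t_pow_nf j1) = coset_nf m n w1"
    unfolding mem_lkL_aline_iff by blast
  from v2 obtain j2 where j2: "word_act m n h (t_pow_nf j2) = coset_nf m n w2"
    unfolding v tline_mem_lkL_aline_iff by blast
  have "aline m n w1 = aline m n (h @ gpow GT j1)"
    using j1 by (simp add: aline_eq_iff coset_nf_append_gpow_GT)
  moreover have "aline m n w2 = aline m n ((h @ gpow GT j1) @ gpow GT (j2 - j1))"
    using j2 by (simp add: aline_eq_iff word_act_append coset_nf_gpow_GT word_act_gpow_GT_t_pow_nf)
  ultimately show ?thesis
    by (rule that)
qed

lemma common_link_subset_lkL_first_step:
  assumes "d \<noteq> 0"
  shows "lkL m n (True, aline m n g) \<inter> lkL m n (True, aline m n (g @ gpow GT d))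
           \<subseteq> lkL m n (True, aline m n (g @ gpow GT (sgn d)))"
proof
  fix v
  assume "v \<in> lkL m n (True, aline m n g) \<inter> lkL m n (True, aline m n (g @ gpow GT d))"
  then have v1: "v \<in> lkL m n (True, aline m n g)" and v2: "v \<in> lkL m n (True, aline m n (g @ gpow GT d))"
    by simp_all
  from v1 obtain h j1 where v: "v = (False, tline m n h)"
    and j1: "word_act m n h (t_pow_nf j1) = coset_nf m n g"
    unfolding mem_lkL_aline_iff by blast
  from v2 obtain j2 where j2: "word_act m n h (t_pow_nf j2) = word_act m n g (t_pow_nf d)"
    unfolding v tline_mem_lkL_aline_iff coset_nf_append_gpow_GT by blast
  define h' where "h' = h @ gpow GT j1"
  have "coset_nf m n h' = coset_nf m n g"
    using j1 by (simp add: h'_def coset_nf_append_gpow_GT)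
  then obtain c where c: "\<And>s. is_nf m n s \<Longrightarrow> word_act m n h' s = word_act m n g (a_act m n c s)"
    using word_act_same_coset by blast
  have "word_act m n h' (t_pow_nf (j2 - j1)) = word_act m n g (t_pow_nf d)"
    using j2 by (simp add: h'_def word_act_append word_act_gpow_GT_t_pow_nf)
  then have fixes_d: "a_act m n c (t_pow_nf (j2 - j1)) = t_pow_nf d"
    using c word_act_inj is_nf_a_act is_nf_t_pow_nf by metis
  then have "j2 - j1 = d"
    using map_snd_a_act map_snd_t_pow_nf_inj by metis
  then have "a_act m n c (t_pow_nf (sgn d)) = t_pow_nf (sgn d)"
    using fixes_d a_act_fixes_t_pow_nf_sgn assms by blast
  then have "word_act m n h (t_pow_nf (j1 + sgn d)) = word_act m n g (t_pow_nf (sgn d))"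
    using c[OF is_nf_t_pow_nf] by (simp add: h'_def word_act_append word_act_gpow_GT_t_pow_nf)
  then show "v \<in> lkL m n (True, aline m n (g @ gpow GT (sgn d)))"
    unfolding v tline_mem_lkL_aline_iff coset_nf_append_gpow_GT by blast
qed

text \<open>This is the relation a^(i n) t = t a^(i m).\<close>

lemma a_pow_n_tline_common_neighbour:
  "(False, tline m n (g @ gpow GA (i * n)))
     \<in> lkL m n (True, aline m n g) \<inter> lkL m n (True, aline m n (g @ gpow GT 1))"
proof -
  have "word_act m n g (a_act m n (i * n) (t_pow_nf 0)) = coset_nf m n g"
    and "word_act m n g (a_act m n (i * n) (t_pow_nf 1)) = word_act m n g (t_pow_nf 1)"
    by simp_all
  then show ?thesis
    unfolding Int_iff tline_mem_lkL_aline_iff word_act_append_gpow_GA[OF is_nf_t_pow_nf]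
      coset_nf_append_gpow_GT
    by blast
qed

lemma t_edge_common_link_not_subset:
  assumes "\<bar>m\<bar> < \<bar>n\<bar>" and "\<not> m dvd n"
    and u3: "u3 \<in> Lverts m n - {(True, aline m n g), (True, aline m n (g @ gpow GT 1))}"
  shows "\<not> lkL m n (True, aline m n g) \<inter> lkL m n (True, aline m n (g @ gpow GT 1)) \<subseteq> lkL m n u3"
proof
  assume sub: "lkL m n (True, aline m n g) \<inter> lkL m n (True, aline m n (g @ gpow GT 1)) \<subseteq> lkL m n u3"
  define L where "L i = (False, tline m n (g @ gpow GA (i * n)))" for i :: int
  have L_common: "L i \<in> lkL m n (True, aline m n g) \<inter> lkL m n (True, aline m n (g @ gpow GT 1))" for i
    unfolding L_def by (rule a_pow_n_tline_common_neighbour)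
  show False
  proof (cases "fst u3")
    case False
    have "L 0 \<in> lkL m n u3"
      using L_common sub by blast
    then show False
      using lkL_fst_neq[of u3 m n "L 0"] u3 False by (simp add: L_def)
  next
    case True
    then obtain v where v: "u3 = (True, aline m n v)"
      using u3 by (auto simp: Lverts_def)
    have "L i \<in> lkL m n (True, aline m n v)" for i
      using L_common sub v by blast
    then have "\<exists>j. word_act m n g (a_act m n (i * n) (t_pow_nf j)) = coset_nf m n v" for i
      unfolding L_def tline_mem_lkL_aline_iff word_act_append_gpow_GA[OF is_nf_t_pow_nf] .
    then obtain j0 j1 where j0: "word_act m n g (t_pow_nf j0) = coset_nf m n v"
      and j1: "word_act m n g (a_act m n n (t_pow_nf j1)) = coset_nf m n v"
      using a_act_0[OF is_nf_t_pow_nf] by (metis mult_zero_left mult_1)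
    then have "a_act m n n (t_pow_nf j1) = t_pow_nf j0"
      using word_act_inj is_nf_t_pow_nf is_nf_a_act by metis
    then have "j0 \<in> {0, 1}"
      by (rule a_act_n_t_pow_nf_eq_imp[OF m_nonzero assms(1,2)])
    then have "aline m n v = aline m n g \<or> aline m n v = aline m n (g @ gpow GT 1)"
      unfolding aline_eq_iff coset_nf_append_gpow_GT using j0 by auto
    then show False
      using u3 v by auto
  qed
qed

lemma Tadj_imp_common_link_not_subset:
  assumes "\<bar>m\<bar> < \<bar>n\<bar>" and "\<not> m dvd n" and "Tadj m n (aline m n w1) (aline m n w2)"
    and "u3 \<in> Lverts m n - {(True, aline m n w1), (True, aline m n w2)}"
  shows "\<not> lkL m n (True, aline m n w1) \<inter> lkL m n (True, aline m n w2) \<subseteq> lkL m n u3"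
  using assms(3)
proof (unfold Tadj_def Tedge_aline_iff, elim disjE exE conjE)
  fix g
  assume "aline m n w1 = aline m n g" and "aline m n w2 = aline m n (g @ gpow GT 1)"
  then show ?thesis
    using t_edge_common_link_not_subset[OF assms(1,2), of u3 g] assms(4) by simp
next
  fix g
  assume "aline m n w2 = aline m n g" and "aline m n w1 = aline m n (g @ gpow GT 1)"
  then show ?thesis
    using t_edge_common_link_not_subset[OF assms(1,2), of u3 g] assms(4)
    by (simp add: Int_commute insert_commute)
qed

lemma not_Tadj_imp_common_link_subset:
  assumes "aline m n w1 \<noteq> aline m n w2" and "\<not> Tadj m n (aline m n w1) (aline m n w2)"
  shows "\<exists>u3 \<in> Lverts m n - {(True, aline m n w1), (True, aline m n w2)}.
           lkL m n (True, aline m n w1) \<inter> lkL m n (True, aline m n w2) \<subseteq> lkL m n u3"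
proof (cases "lkL m n (True, aline m n w1) \<inter> lkL m n (True, aline m n w2) = {}")
  case True
  have "(False, tline m n []) \<in> Lverts m n - {(True, aline m n w1), (True, aline m n w2)}"
    by (auto simp: Lverts_def)
  then show ?thesis
    using True by blast
next
  case False
  then obtain g d where w1: "aline m n w1 = aline m n g" and w2: "aline m n w2 = aline m n (g @ gpow GT d)"
    by (rule common_neighbour_imp_t_pow)
  have "d \<noteq> 0"
    using assms(1) w1 w2 by auto
  moreover have "\<bar>d\<bar> \<noteq> 1"
    using assms(2) Tadj_aline_t_pow w1 w2 by auto
  ultimately have "sgn d \<noteq> 0" and "sgn d \<noteq> d"
    by (auto simp: sgn_if)
  then have "(True, aline m n (g @ gpow GT (sgn d))) \<in> Lverts m n - {(True, aline m n w1), (True, aline m n w2)}"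
    using aline_t_pow_eq_iff[of g "sgn d" 0] aline_t_pow_eq_iff[of g "sgn d" d] w1 w2
    by (auto simp: Lverts_def)
  then show ?thesis
    using common_link_subset_lkL_first_step[OF \<open>d \<noteq> 0\<close>, of g] w1 w2 by auto
qed

end

theorem lemma3p8:
  fixes m n :: int and u1 u2 :: lvert
  assumes "m \<noteq> 0" and "n \<noteq> 0" and "\<bar>m\<bar> < \<bar>n\<bar>" and "\<not> m dvd n"
    and "u1 \<in> Lverts m n" and "fst u1" and "u2 \<in> Lverts m n" and "fst u2"
    and "Tless m n (snd u1) (snd u2) \<or> Tless m n (snd u2) (snd u1)"
  shows "Tadj m n (snd u1) (snd u2) \<longleftrightarrow>
    \<not> (\<exists>u3 \<in> Lverts m n - {u1, u2}. lkL m n u1 \<inter> lkL m n u2 \<subseteq> lkL m n u3)"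
proof -
  interpret nonzero_exponents m n
    using assms(1,2) by unfold_locales
  obtain w1 w2 where u1: "u1 = (True, aline m n w1)" and u2: "u2 = (True, aline m n w2)"
    using assms(5-8) by (auto simp: Lverts_def)
  text \<open>Comparability is used only for u1 \<noteq> u2; a common neighbour makes the two vertices
    comparable anyway.\<close>
  have "aline m n w1 \<noteq> aline m n w2"
    using assms(9) by (auto simp: Tless_def u1 u2)
  then show ?thesis
    using Tadj_imp_common_link_not_subset[OF assms(3,4)] not_Tadj_imp_common_link_subset
    unfolding u1 u2 snd_conv by blast
qed

end
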